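(* Let $n\ge3$, let $p(t)=2(t-1)+3(t-1)^2+\frac23(t-1)^3-\frac16(t-1)^4+\frac1{15}(t-1)^5$, and let $$F(x)=\frac{1}{1-\cos(2\pi/n)}\sum_{i\in\mathbb{Z}_n}(x_i-x_{i+1})^2-\sum_{i=1}^n p(x_i)\in\mathbb{R}[x_1,\dots,x_n].$$ Let $W\subseteq\mathbb{R}[x]_3$ be a linear subspace. Suppose there exist $h\in\mathbb{R}[x]_4$ and a basis $q_1,\dots,q_N$ of $W$ such that $F(x)+(\|x\|^2-n)h(x)=\sum_{j=1}^N q_j(x)^2$ (equivalently, the sum-of-squares representation has a positive definite Gram matrix with respect to a basis of $W$). Then $$W\subseteq W_{\max}:=\{q\in\mathbb{R}[x]_3:\ q(\mathbf{1})=0,\ \phi^\top\nabla q(\mathbf{1})=0,\ \psi^\top\nabla q(\mathbf{1})=0\},$$ where $\mathbf 1=(1,\dots,1)$, $\phi_i=\cos(2\pi i/n)$ and $\psi_i=\sin(2\pi i/n)$ for $i=1,\dots,n$.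
   Context: $\mathbb{R}[x]_k$ denotes real polynomials in $x=(x_1,\dots,x_n)$ of degree at most $k$; $\|x\|^2=\sum_i x_i^2$; indices are taken modulo $n$. *)

theory Defs
  imports "HOL-Analysis.Analysis"
begin

text \<open>Points of R^n are modelled as functions nat => real, using coordinates 0..n-1
  (coordinate j corresponds to the paper's x_(j+1)).\<close>

definition exps :: "nat \<Rightarrow> nat \<Rightarrow> (nat \<Rightarrow> nat) set" where
  "exps n k = {\<alpha>. (\<forall>i\<ge>n. \<alpha> i = 0) \<and> (\<Sum>i<n. \<alpha> i) \<le> k}"

definition polys :: "nat \<Rightarrow> nat \<Rightarrow> ((nat \<Rightarrow> real) \<Rightarrow> real) set" where
  "polys n k = {f. \<exists>c :: (nat \<Rightarrow> nat) \<Rightarrow> real.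
      \<forall>x. f x = (\<Sum>\<alpha>\<in>exps n k. c \<alpha> * (\<Prod>i<n. x i ^ \<alpha> i))}"

definition pfun :: "real \<Rightarrow> real" where
  "pfun t = 2*(t-1) + 3*(t-1)^2 + (2/3)*(t-1)^3 - (1/6)*(t-1)^4 + (1/15)*(t-1)^5"

definition Ffun :: "nat \<Rightarrow> (nat \<Rightarrow> real) \<Rightarrow> real" where
  "Ffun n x = 1 / (1 - cos (2*pi / real n)) * (\<Sum>i<n. (x i - x ((i+1) mod n))^2)
              - (\<Sum>i<n. pfun (x i))"

definition sqnorm :: "nat \<Rightarrow> (nat \<Rightarrow> real) \<Rightarrow> real" where
  "sqnorm n x = (\<Sum>i<n. (x i)^2)"

definition ones :: "nat \<Rightarrow> real" where
  "ones = (\<lambda>_. 1)"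

definition pderiv_at :: "((nat \<Rightarrow> real) \<Rightarrow> real) \<Rightarrow> nat \<Rightarrow> (nat \<Rightarrow> real) \<Rightarrow> real" where
  "pderiv_at q i a = deriv (\<lambda>t. q (a(i := t))) (a i)"

definition phi :: "nat \<Rightarrow> nat \<Rightarrow> real" where
  "phi n j = cos (2*pi*real (j+1) / real n)"

definition psi :: "nat \<Rightarrow> nat \<Rightarrow> real" where
  "psi n j = sin (2*pi*real (j+1) / real n)"

definition Wmax :: "nat \<Rightarrow> ((nat \<Rightarrow> real) \<Rightarrow> real) set" where
  "Wmax n = {q \<in> polys n 3. q ones = 0
      \<and> (\<Sum>i<n. phi n i * pderiv_at q i ones) = 0
      \<and> (\<Sum>i<n. psi n i * pderiv_at q i ones) = 0}"

definition is_subspace :: "('a \<Rightarrow> real) set \<Rightarrow> bool" where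
  "is_subspace W \<longleftrightarrow> (\<lambda>_. 0) \<in> W \<and> (\<forall>f\<in>W. \<forall>g\<in>W. (\<lambda>x. f x + g x) \<in> W)
      \<and> (\<forall>c. \<forall>f\<in>W. (\<lambda>x. c * f x) \<in> W)"

definition is_basis :: "('a \<Rightarrow> real) set \<Rightarrow> nat \<Rightarrow> (nat \<Rightarrow> 'a \<Rightarrow> real) \<Rightarrow> bool" where
  "is_basis W N q \<longleftrightarrow> (\<forall>j<N. q j \<in> W)
     \<and> (\<forall>c. (\<forall>x. (\<Sum>j<N. c j * q j x) = 0) \<longrightarrow> (\<forall>j<N. c j = 0))
     \<and> (\<forall>w\<in>W. \<exists>c. \<forall>x. w x = (\<Sum>j<N. c j * q j x))"

end

theory Submission
  imports Defs
begin

text \<open>Restrict the certificate to the lines \<open>t \<mapsto> \<one> + t v\<close>. Since \<open>F(\<one>) = 0\<close>, every \<open>q\<^sub>j\<close>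
  vanishes at \<open>\<one>\<close>. Along \<open>v = \<one>\<close> the sum of squares is \<open>t\<cdot>R(t)\<close> with \<open>R(0) = 2n(h(\<one>) - 1)\<close>,
  and nonnegativity for both signs of \<open>t\<close> forces \<open>h(\<one>) = 1\<close>. For \<open>\<Sum>v\<^sub>i = 0\<close> the sum of squares
  is divisible by \<open>t\<^sup>2\<close>, and comparing second derivatives at \<open>t = 0\<close> gives
  \<open>\<Sum>\<^sub>j (\<nabla>q\<^sub>j(\<one>)\<cdot>v)\<^sup>2 = \<Sum>\<^sub>i (v\<^sub>i - v\<^sub>i\<^sub>+\<^sub>1)\<^sup>2 / (1 - cos(2\<pi>/n)) - 2\<Sum>\<^sub>i v\<^sub>i\<^sup>2\<close>. The Fourier modes
  \<open>\<phi>, \<psi>\<close> of the \<open>n\<close>-cycle are eigenvectors of its Laplacian with eigenvalue \<open>2(1 - cos(2\<pi>/n))\<close>,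
  so the right-hand side vanishes for them; the conditions pass from the basis \<open>q\<^sub>j\<close> to all
  of \<open>W\<close> by linearity.\<close>

lemma sum_cos_arith_progression_eq_0:
  fixes b h :: real
  assumes "sin (h/2) \<noteq> 0" and "real n * h = 2*pi*real k"
  shows "(\<Sum>i<n. cos (b + real i * h)) = 0"
proof -
  define g where "g i = sin (b + real i * h - h/2)" for i :: nat
  have telescope: "2 * sin (h/2) * cos (b + real i * h) = g (Suc i) - g i" for i
  proof -
    have "g (Suc i) = sin ((b + real i * h) + h/2)" and "g i = sin ((b + real i * h) - h/2)"
      unfolding g_def by (simp_all add: algebra_simps)
    then show ?thesis by (simp add: sin_add sin_diff)
  qed
  have "g n = sin ((b - h/2) + 2 * real k * pi)"
    unfolding g_def using assms(2) by (simp add: algebra_simps)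
  then have "g n = g 0" by (simp add: g_def sin_add)
  then have "2 * sin (h/2) * (\<Sum>i<n. cos (b + real i * h)) = 0"
    by (simp add: sum_distrib_left telescope sum_lessThan_telescope)
  then show ?thesis using assms(1) by simp
qed

lemma cos_diff_shift_sq:
  fixes a h :: real
  shows "(cos a - cos (a + h))^2 = (1 - cos h) * (1 - cos (2*a + h))"
proof -
  have "cos (2*a + h) = cos a * cos (a + h) - sin a * sin (a + h)"
    using cos_add[of a "a + h"] by (simp add: algebra_simps)
  moreover have "cos h = cos (a + h) * cos a + sin (a + h) * sin a"
    using cos_diff[of "a + h" a] by simp
  ultimately show ?thesis
    using sin_cos_squared_add[of a] sin_cos_squared_add[of "a + h"] by algebra
qed

lemma cyclic_cos_mode:
  fixes b :: real
  assumes "n \<ge> 3"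
  defines "\<theta> \<equiv> 2*pi / real n"
  defines "u \<equiv> \<lambda>i. cos (b + real (Suc i) * \<theta>)"
  shows "(\<Sum>i<n. u i) = 0"
    and "(\<Sum>i<n. (u i - u ((i+1) mod n))^2) = 2 * (1 - cos \<theta>) * (\<Sum>i<n. (u i)^2)"
proof -
  have n\<theta>: "real n * \<theta> = 2*pi" using assms(1) by (simp add: \<theta>_def field_simps)
  have "0 < \<theta>" "\<theta> < pi"
    using assms(1) by (auto simp: \<theta>_def divide_simps)
  then have sin1: "sin (\<theta>/2) \<noteq> 0" and sin2: "sin ((2*\<theta>)/2) \<noteq> 0"
    by (simp_all add: sin_gt_zero less_imp_neq[symmetric])
  have zero1: "(\<Sum>i<n. cos (c + real i * \<theta>)) = 0" for c
    by (rule sum_cos_arith_progression_eq_0[OF sin1, of n 1]) (simp add: n\<theta>)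
  have zero2: "(\<Sum>i<n. cos (c + real i * (2*\<theta>))) = 0" for c
    by (rule sum_cos_arith_progression_eq_0[OF sin2, of n 2]) (use n\<theta> in \<open>simp add: algebra_simps\<close>)
  have u_eq: "u i = cos ((b + \<theta>) + real i * \<theta>)" for i
    by (simp add: u_def algebra_simps)
  show "(\<Sum>i<n. u i) = 0" by (simp add: u_eq zero1)
  have u_succ: "u ((i+1) mod n) = cos (b + real (Suc i) * \<theta> + \<theta>)" if "i < n" for i
  proof (cases "Suc i = n")
    case True
    then have "b + real (Suc i) * \<theta> + \<theta> = (b + \<theta>) + 2*pi"
      using n\<theta> by (simp add: algebra_simps)
    then show ?thesis using True by (simp add: u_def cos_add)
  next
    case False
    then show ?thesis using that by (simp add: u_def algebra_simps)
  qed
  have "(\<Sum>i<n. (u i)^2) = (\<Sum>i<n. 1/2 + cos ((2*b + 2*\<theta>) + real i * (2*\<theta>)) / 2)"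
  proof (intro sum.cong refl)
    fix i
    have double: "cos ((2*b + 2*\<theta>) + real i * (2*\<theta>)) = cos (2 * (b + real (Suc i) * \<theta>))"
      by (rule arg_cong[where f=cos]) (simp add: algebra_simps)
    show "(u i)^2 = 1/2 + cos ((2*b + 2*\<theta>) + real i * (2*\<theta>)) / 2"
      unfolding double u_def cos_double_cos by (simp add: field_simps)
  qed
  also have "\<dots> = real n / 2"
    by (simp add: sum.distrib zero2 flip: sum_divide_distrib)
  finally have sq: "(\<Sum>i<n. (u i)^2) = real n / 2" .
  have "(\<Sum>i<n. (u i - u ((i+1) mod n))^2)
      = (\<Sum>i<n. (1 - cos \<theta>) * (1 - cos ((2*b + 3*\<theta>) + real i * (2*\<theta>))))"
  proof (intro sum.cong refl)
    fix i assume "i \<in> {..<n}"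
    then have "i < n" by simp
    have double: "cos ((2*b + 3*\<theta>) + real i * (2*\<theta>)) = cos (2 * (b + real (Suc i) * \<theta>) + \<theta>)"
      by (rule arg_cong[where f=cos]) (simp add: algebra_simps)
    show "(u i - u ((i+1) mod n))^2 = (1 - cos \<theta>) * (1 - cos ((2*b + 3*\<theta>) + real i * (2*\<theta>)))"
      unfolding u_succ[OF \<open>i < n\<close>] unfolding double u_def cos_diff_shift_sq ..
  qed
  also have "\<dots> = (1 - cos \<theta>) * real n"
    by (simp add: sum_subtractf zero2 flip: sum_distrib_left)
  finally show "(\<Sum>i<n. (u i - u ((i+1) mod n))^2) = 2 * (1 - cos \<theta>) * (\<Sum>i<n. (u i)^2)"
    by (simp add: sq)
qed

lemma phi_psi_cyclic_modes:
  assumes "n \<ge> 3" and "v = phi n \<or> v = psi n"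
  shows "(\<Sum>i<n. v i) = 0"
    and "1 / (1 - cos (2*pi / real n)) * (\<Sum>i<n. (v i - v ((i+1) mod n))^2) = 2 * (\<Sum>i<n. (v i)^2)"
proof -
  define \<theta> where "\<theta> = 2*pi / real n"
  have "phi n = (\<lambda>i. cos (0 + real (Suc i) * \<theta>))"
    by (auto simp: fun_eq_iff phi_def \<theta>_def intro!: arg_cong[where f=cos])
  moreover have "psi n = (\<lambda>i. cos (- (pi/2) + real (Suc i) * \<theta>))"
    by (auto simp: fun_eq_iff psi_def \<theta>_def cos_sin_eq intro!: arg_cong[where f=sin])
  ultimately obtain b where v: "v = (\<lambda>i. cos (b + real (Suc i) * \<theta>))"
    using assms(2) by blast
  have "0 < \<theta>" "\<theta> < pi"
    using assms(1) by (auto simp: \<theta>_def divide_simps)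
  then have "cos \<theta> < 1" using cos_monotone_0_pi[of 0 \<theta>] by simp
  moreover have "(\<Sum>i<n. (v i - v ((i+1) mod n))^2) = 2 * (1 - cos \<theta>) * (\<Sum>i<n. (v i)^2)"
    using cyclic_cos_mode(2)[OF assms(1), of b] by (simp only: v \<theta>_def)
  ultimately show "1 / (1 - cos (2*pi / real n)) * (\<Sum>i<n. (v i - v ((i+1) mod n))^2) = 2 * (\<Sum>i<n. (v i)^2)"
    unfolding \<theta>_def[symmetric] by (simp add: field_simps)
  show "(\<Sum>i<n. v i) = 0"
    using cyclic_cos_mode(1)[OF assms(1), of b] by (simp only: v \<theta>_def)
qed

definition dir_deriv_ones :: "nat \<Rightarrow> ((nat \<Rightarrow> real) \<Rightarrow> real) \<Rightarrow> (nat \<Rightarrow> real) \<Rightarrow> real" where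
  "dir_deriv_ones n f v = (\<Sum>i<n. v i * pderiv_at f i ones)"

lemma has_real_derivative_prod_power_line:
  assumes "finite I"
  shows "((\<lambda>t. \<Prod>i\<in>I. (1 + t * v i) ^ m i) has_real_derivative (\<Sum>i\<in>I. real (m i) * v i)) (at 0)"
  using assms
proof (induction I rule: finite_induct)
  case (insert a I)
  have "((\<lambda>t. (1 + t * v a) ^ m a) has_real_derivative real (m a) * v a) (at 0)"
    by (auto intro!: derivative_eq_intros)
  from DERIV_mult[OF this insert.IH] show ?case
    using insert.hyps by (simp add: mult_ac)
qed simp

lemma pderiv_at_ones_polys:
  assumes f: "\<And>x. f x = (\<Sum>\<alpha>\<in>exps n k. c \<alpha> * (\<Prod>j<n. x j ^ \<alpha> j))" and "i < n"
  shows "pderiv_at f i ones = (\<Sum>\<alpha>\<in>exps n k. c \<alpha> * real (\<alpha> i))"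
proof -
  have "(\<Prod>j<n. (ones(i:=t)) j ^ \<alpha> j) = (\<Prod>j<n. if j = i then t ^ \<alpha> i else 1)" for t \<alpha>
    by (intro prod.cong) (auto simp: ones_def)
  then have "(\<Prod>j<n. (ones(i:=t)) j ^ \<alpha> j) = t ^ \<alpha> i" for t \<alpha>
    using \<open>i < n\<close> by simp
  then have "(\<lambda>t. f (ones(i:=t))) = (\<lambda>t. \<Sum>\<alpha>\<in>exps n k. c \<alpha> * t ^ \<alpha> i)"
    by (simp add: f)
  moreover have "((\<lambda>t. \<Sum>\<alpha>\<in>exps n k. c \<alpha> * t ^ \<alpha> i) has_real_derivative
      (\<Sum>\<alpha>\<in>exps n k. c \<alpha> * real (\<alpha> i))) (at 1)"
    by (auto intro!: derivative_eq_intros simp: mult.commute)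
  ultimately show ?thesis
    unfolding pderiv_at_def by (simp add: DERIV_imp_deriv ones_def)
qed

lemma polys_has_dir_deriv_ones:
  assumes "f \<in> polys n k"
  shows "((\<lambda>t. f (\<lambda>i. 1 + t * v i)) has_real_derivative dir_deriv_ones n f v) (at 0)"
proof -
  obtain c where f: "\<And>x. f x = (\<Sum>\<alpha>\<in>exps n k. c \<alpha> * (\<Prod>i<n. x i ^ \<alpha> i))"
    using assms unfolding polys_def by blast
  have "dir_deriv_ones n f v = (\<Sum>i<n. \<Sum>\<alpha>\<in>exps n k. c \<alpha> * (real (\<alpha> i) * v i))"
    unfolding dir_deriv_ones_def
    by (intro sum.cong refl) (simp add: pderiv_at_ones_polys[OF f] sum_distrib_left mult_ac)
  also have "\<dots> = (\<Sum>\<alpha>\<in>exps n k. c \<alpha> * (\<Sum>i<n. real (\<alpha> i) * v i))"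
    by (subst sum.swap) (simp add: sum_distrib_left)
  finally show ?thesis
    unfolding f by (auto intro!: DERIV_sum DERIV_cmult has_real_derivative_prod_power_line)
qed

lemma dir_deriv_ones_lincomb:
  assumes "f \<in> polys n k" and "\<forall>j<N. q j \<in> polys n k"
    and "\<And>x. f x = (\<Sum>j<N. c j * q j x)"
  shows "dir_deriv_ones n f v = (\<Sum>j<N. c j * dir_deriv_ones n (q j) v)"
proof (rule DERIV_unique)
  show "((\<lambda>t. f (\<lambda>i. 1 + t * v i)) has_real_derivative dir_deriv_ones n f v) (at 0)"
    using assms(1) by (rule polys_has_dir_deriv_ones)
  show "((\<lambda>t. f (\<lambda>i. 1 + t * v i)) has_real_derivative (\<Sum>j<N. c j * dir_deriv_ones n (q j) v)) (at 0)"
    unfolding assms(3) using assms(2)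
    by (auto intro!: DERIV_sum DERIV_cmult polys_has_dir_deriv_ones)
qed

lemma isCont_eq_0_if_mult_nonneg:
  fixes R :: "real \<Rightarrow> real"
  assumes "\<And>t. 0 \<le> t * R t" and "isCont R 0"
  shows "R 0 = 0"
proof -
  have "(R \<longlongrightarrow> R 0) (at_right 0)" "(R \<longlongrightarrow> R 0) (at_left 0)"
    using assms(2) by (simp_all add: isCont_def filterlim_at_split)
  moreover have "0 \<le> R t" if "t > 0" for t
    using assms(1)[of t] that by (simp add: zero_le_mult_iff)
  then have "\<forall>\<^sub>F t in at_right 0. 0 \<le> R t"
    by (simp add: eventually_at_filter)
  moreover have "R t \<le> 0" if "t < 0" for t
    using assms(1)[of t] that by (simp add: zero_le_mult_iff)
  then have "\<forall>\<^sub>F t in at_left 0. R t \<le> 0"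
    by (simp add: eventually_at_filter)
  ultimately have "0 \<le> R 0" "R 0 \<le> 0"
    by (auto intro: tendsto_lowerbound tendsto_upperbound)
  then show ?thesis by simp
qed

lemma sum_power2_derivs_eq:
  fixes g :: "'a \<Rightarrow> real \<Rightarrow> real"
  assumes "finite J"
    and "\<And>j. j \<in> J \<Longrightarrow> (g j has_real_derivative D j) (at 0)" and "\<And>j. j \<in> J \<Longrightarrow> g j 0 = 0"
    and "\<And>t. (\<Sum>j\<in>J. (g j t)^2) = t^2 * R t" and "isCont R 0"
  shows "(\<Sum>j\<in>J. (D j)^2) = R 0"
proof (rule tendsto_unique)
  have "((\<lambda>t. g j t / t) \<longlongrightarrow> D j) (at 0)" if "j \<in> J" for j
    using assms(2,3)[OF that] by (simp add: has_field_derivative_iff)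
  then show "((\<lambda>t. \<Sum>j\<in>J. (g j t / t)^2) \<longlongrightarrow> (\<Sum>j\<in>J. (D j)^2)) (at 0)"
    by (auto intro!: tendsto_sum tendsto_power)
  have "\<forall>\<^sub>F t in at 0. R t = (\<Sum>j\<in>J. (g j t / t)^2)"
    by (auto simp: eventually_at_filter power_divide assms(4) intro!: always_eventually
        simp flip: sum_divide_distrib)
  then show "((\<lambda>t. \<Sum>j\<in>J. (g j t / t)^2) \<longlongrightarrow> R 0) (at 0)"
    using assms(5) by (auto simp: isCont_def intro: Lim_transform_eventually)
qed simp


definition pfun_rem :: "real \<Rightarrow> real" where
  "pfun_rem y = 2/3 - y/6 + y^2/15"

lemma pfun_expansion: "pfun (1 + y) = 2*y + 3*y^2 + y^3 * pfun_rem y"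
  by (simp add: pfun_def pfun_rem_def algebra_simps power2_eq_square power3_eq_cube numeral_eq_Suc)

lemma Ffun_multiplier_on_line:
  fixes n :: nat and t :: real and v :: "nat \<Rightarrow> real" and h :: "(nat \<Rightarrow> real) \<Rightarrow> real"
  defines "x \<equiv> \<lambda>i. 1 + t * v i"
    and "S \<equiv> \<Sum>i<n. (v i - v ((i+1) mod n))^2" and "V \<equiv> \<Sum>i<n. (v i)^2"
  shows "Ffun n x + (sqnorm n x - real n) * h x
    = t^2 * (1 / (1 - cos (2*pi / real n)) * S - 3 * V + V * h x - t * (\<Sum>i<n. v i ^ 3 * pfun_rem (t * v i)))
      + 2 * t * (\<Sum>i<n. v i) * (h x - 1)"
proof -
  have "(\<Sum>i<n. (x i - x ((i+1) mod n))^2) = t^2 * S"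
    unfolding S_def sum_distrib_left
    by (intro sum.cong refl) (simp add: x_def power2_eq_square algebra_simps)
  moreover have "(\<Sum>i<n. pfun (x i))
      = 2 * t * (\<Sum>i<n. v i) + 3 * t^2 * V + t^3 * (\<Sum>i<n. v i ^ 3 * pfun_rem (t * v i))"
    unfolding V_def sum_distrib_left x_def pfun_expansion
    by (simp add: sum.distrib power_mult_distrib mult_ac)
  moreover have "sqnorm n x - real n = 2 * t * (\<Sum>i<n. v i) + t^2 * V"
    unfolding sqnorm_def V_def sum_distrib_left x_def
    by (simp add: power2_sum sum.distrib power_mult_distrib mult_ac)
  ultimately show ?thesis
    unfolding Ffun_def by (simp add: algebra_simps power2_eq_square power3_eq_cube)
qed

lemma isCont_polys_along_line:
  assumes "f \<in> polys n k"
  shows "isCont (\<lambda>t. f (\<lambda>i. 1 + t * v i)) 0"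
  using DERIV_isCont[OF polys_has_dir_deriv_ones[OF assms]] .

lemma sos_multiplier_at_ones:
  fixes N :: nat
  assumes "n > 0" and "h \<in> polys n 4"
    and eq: "\<forall>x. Ffun n x + (sqnorm n x - real n) * h x = (\<Sum>j<N. (q j x)^2)"
  shows "h ones = 1"
proof -
  define x where "x t = (\<lambda>i::nat. 1 + t * ones i)" for t :: real
  define R where "R t = t * (real n * h (x t) - 3 * real n - t * real n * pfun_rem t)
      + 2 * real n * (h (x t) - 1)" for t
  have "0 \<le> t * R t" for t
  proof -
    have "0 \<le> (\<Sum>j<N. (q j (x t))^2)" by (simp add: sum_nonneg)
    also have "\<dots> = Ffun n (x t) + (sqnorm n (x t) - real n) * h (x t)"
      using eq by simp
    also have "\<dots> = t * R t"
      unfolding x_def R_def Ffun_multiplier_on_line by (simp add: ones_def power2_eq_square algebra_simps)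
    finally show ?thesis .
  qed
  moreover have "isCont R 0"
    unfolding R_def pfun_rem_def
    using isCont_polys_along_line[OF assms(2), of ones]
    by (auto simp: x_def intro!: continuous_intros)
  ultimately have "R 0 = 0" by (rule isCont_eq_0_if_mult_nonneg)
  moreover have "x 0 = ones" by (simp add: x_def ones_def)
  ultimately show ?thesis using assms(1) by (simp add: R_def)
qed


lemma sos_dir_deriv_ones_eq_0:
  fixes N :: nat
  assumes "h \<in> polys n 4" and "\<forall>j<N. q j \<in> polys n 3"
    and eq: "\<forall>x. Ffun n x + (sqnorm n x - real n) * h x = (\<Sum>j<N. (q j x)^2)"
    and "\<forall>j<N. q j ones = 0" and "h ones = 1"
    and "(\<Sum>i<n. v i) = 0"
    and "1 / (1 - cos (2*pi / real n)) * (\<Sum>i<n. (v i - v ((i+1) mod n))^2) = 2 * (\<Sum>i<n. (v i)^2)"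
    and "j < N"
  shows "dir_deriv_ones n (q j) v = 0"
proof -
  define x where "x t = (\<lambda>i::nat. 1 + t * v i)" for t :: real
  define V where "V = (\<Sum>i<n. (v i)^2)"
  define R where "R t = 2 * V - 3 * V + V * h (x t) - t * (\<Sum>i<n. v i ^ 3 * pfun_rem (t * v i))" for t
  have x0: "x 0 = ones" by (simp add: x_def ones_def)
  have "(\<Sum>j<N. (dir_deriv_ones n (q j) v)^2) = R 0"
  proof (rule sum_power2_derivs_eq)
    show "((\<lambda>t. q j (x t)) has_real_derivative dir_deriv_ones n (q j) v) (at 0)" if "j \<in> {..<N}" for j
      using that assms(2) by (auto simp: x_def intro: polys_has_dir_deriv_ones)
    show "q j (x 0) = 0" if "j \<in> {..<N}" for j
      using that assms(4) by (simp add: x0)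
    show "(\<Sum>j<N. (q j (x t))^2) = t^2 * R t" for t
      using eq[rule_format, of "x t"] assms(6,7)
      unfolding x_def R_def V_def Ffun_multiplier_on_line by simp
    show "isCont R 0"
      unfolding R_def x_def pfun_rem_def
      using isCont_polys_along_line[OF assms(1), of v] by (auto intro!: continuous_intros)
  qed simp
  also have "\<dots> = 0" by (simp add: R_def x0 assms(5))
  finally show ?thesis
    using assms(8) by (simp add: sum_nonneg_eq_0_iff)
qed

theorem mainTheorem7:
  fixes n :: nat and W :: "((nat \<Rightarrow> real) \<Rightarrow> real) set"
  assumes "n \<ge> 3"
    and "W \<subseteq> polys n 3" and "is_subspace W"
    and "\<exists>h N q. h \<in> polys n 4 \<and> is_basis W N q \<and>
           (\<forall>x. Ffun n x + (sqnorm n x - real n) * h x = (\<Sum>j<N. (q j x)^2))"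
  shows "W \<subseteq> Wmax n"
proof
  obtain h N q where h: "h \<in> polys n 4" and basis: "is_basis W N q"
    and eq: "\<forall>x. Ffun n x + (sqnorm n x - real n) * h x = (\<Sum>j<N. (q j x)^2)"
    using assms(4) by blast
  have q: "\<forall>j<N. q j \<in> polys n 3"
    using basis assms(2) by (auto simp: is_basis_def)
  have "(\<Sum>j<N. (q j ones)^2) = 0"
    using eq[rule_format, of ones] by (simp add: Ffun_def sqnorm_def ones_def pfun_def)
  then have q_ones: "\<forall>j<N. q j ones = 0"
    by (simp add: sum_nonneg_eq_0_iff)
  have h_ones: "h ones = 1"
    using sos_multiplier_at_ones[OF _ h eq] assms(1) by simp
  fix w assume "w \<in> W"
  then obtain c where w: "\<And>x. w x = (\<Sum>j<N. c j * q j x)" and "w \<in> polys n 3"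
    using basis assms(2) unfolding is_basis_def by blast
  have "dir_deriv_ones n w v = 0" if "v = phi n \<or> v = psi n" for v
    using sos_dir_deriv_ones_eq_0[OF h q eq q_ones h_ones phi_psi_cyclic_modes[OF assms(1) that]]
    by (simp add: dir_deriv_ones_lincomb[OF \<open>w \<in> polys n 3\<close> q w])
  then show "w \<in> Wmax n"
    using \<open>w \<in> polys n 3\<close> q_ones by (simp add: Wmax_def w dir_deriv_ones_def)
qed

end
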